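(* Let $V\subseteq\mathbb{A}^n$ be an affine variety defined over $\mathbb{Z}$. Then, with the emerging metric on finite prime fields described in the context, $\mathsf{lm}^{\mathrm{loc}}V(\mathrm{F}_q)=\overline{V(\mathbb{Q})}\subseteq V(\mathbb{R})$: the local ultraproduct of the sets $V(\mathrm{F}_q)$, i.e. the image of $V(\mathrm{F})\cap(\mathrm{F}_{/\mathfrak{l}})^n$ under the coordinatewise quotient map $(\mathrm{F}_{/\mathfrak{l}})^n\to(\mathrm{F}_{/\mathfrak{l}}/\!\approx)^n\cong\mathbb{R}^n$, equals the closure in $\mathbb{R}^n$ of the set of rational points $V(\mathbb{Q})$.
   Context: $V$ is the zero set of finitely many polynomials in $\mathbb{Z}[x_1,\dots,x_n]$, and $V(R)$ denotes its set of points with coordinates in a ring $R$. Let $\mathcal{D}$ be a non-principal ultrafilter on $\mathbb{N}$ containing the set of primes, ${}^*\mathbb{Z}=\mathbb{Z}^{\mathbb{N}}/\mathcal{D}$, $\mathfrak{q}\in{}^*\mathbb{Z}$ the class of $(q)_{q\in\mathbb{N}}$, and $\mathrm{F}={}^*\mathbb{Z}/\mathfrak{q}\,{}^*\mathbb{Z}\cong\prod_{\mathcal{D}}\mathrm{F}_q$ with $\mathrm{F}_q=\mathbb{Z}/q\mathbb{Z}$. Assume there is a model ${}^f\mathbb{Z}$ of arithmetic with $\mathbb{Z}\prec{}^f\mathbb{Z}\prec{}^*\mathbb{Z}$ and $\mathfrak{q}>k$ for all $k\in{}^f\mathbb{Z}$, and let $\mathfrak{l}\in{}^f\mathbb{Z}$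 be a positive infinite integer (so $\mathfrak{l}^n<\mathfrak{q}$ for all $n\in\mathbb{N}$). For $m\in\mathbb{N}$ let $Z(m)=\{k\in{}^*\mathbb{Z}:|k|<\mathfrak{l}^m\}$ (embedded in $\mathrm{F}$ by reduction mod $\mathfrak{q}$), $S_m(\mathrm{F})=\{z\in\mathrm{F}:\exists k_1,k_2\in Z(m),k_2\ne0,\ z=k_1k_2^{-1},\ |k_1|/|k_2|\le m\}$, $\mathrm{F}_{/\mathfrak{l}}=\bigcup_mS_m(\mathrm{F})$, $\|z\|=\mathrm{st}(|k_1|/|k_2|)$ for the minimal such pair $(k_1,k_2)$, $\mathsf{d}(z_1,z_2)=\|z_1-z_2\|$, and $z_1\approx z_2$ iff $\mathsf{d}(z_1,z_2)\le 1/n$ for all $n\in\mathbb{N}$. The quotient $\mathrm{F}_{/\mathfrak{l}}/\!\approx$, with induced operations and metric, is identified with $\mathbb{R}$ (the local ultraproduct $\mathsf{lm}^{\mathrm{loc}}\mathrm{F}_q=\mathbb{R}$), and $n$-tuples are treated coordinatewise. *)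

theory Defs
  imports "HOL-Analysis.Analysis" "HOL-Computational_Algebra.Primes"
begin

type_synonym 'n zpoly = "(int \<times> ('n \<Rightarrow> nat)) list"

definition peval :: "'n::finite zpoly \<Rightarrow> ('n \<Rightarrow> 'a::comm_ring_1) \<Rightarrow> 'a" where
  "peval p x = (\<Sum>(c, e) \<leftarrow> p. of_int c * (\<Prod>i\<in>UNIV. x i ^ e i))"

definition V_real :: "'n::finite zpoly list \<Rightarrow> (real ^ 'n) set" where
  "V_real Ps = {y. \<forall>p\<in>set Ps. peval p (vec_nth y) = 0}"

definition V_rat :: "'n::finite zpoly list \<Rightarrow> (real ^ 'n) set" where
  "V_rat Ps = {y. (\<forall>i. y $ i \<in> \<rat>) \<and> (\<forall>p\<in>set Ps. peval p (vec_nth y) = 0)}"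

definition nonprincipal_ultrafilter :: "nat filter \<Rightarrow> bool" where
  "nonprincipal_ultrafilter D \<longleftrightarrow> D \<noteq> bot \<and>
     (\<forall>P. eventually P D \<or> eventually (\<lambda>x. \<not> P x) D) \<and>
     (\<forall>n. eventually (\<lambda>k. k \<noteq> n) D)"

text \<open>Elements of *Z are represented by sequences nat => int; two sequences
  represent the same element iff they agree D-almost everywhere.\<close>

datatype aterm = AVar nat | AZero | AOne | APlus aterm aterm | ATimes aterm aterm | ANeg aterm

datatype aform = AEq aterm aterm | ALess aterm aterm | ANot aform | AAnd aform aform
  | AEx nat aform

fun teval :: "aterm \<Rightarrow> (nat \<Rightarrow> (nat \<Rightarrow> int)) \<Rightarrow> (nat \<Rightarrow> int)" where
  "teval (AVar i) env = env i"
| "teval AZero env = (\<lambda>_. 0)"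
| "teval AOne env = (\<lambda>_. 1)"
| "teval (APlus s t) env = (\<lambda>q. teval s env q + teval t env q)"
| "teval (ATimes s t) env = (\<lambda>q. teval s env q * teval t env q)"
| "teval (ANeg s) env = (\<lambda>q. - teval s env q)"

fun sat :: "nat filter \<Rightarrow> (nat \<Rightarrow> int) set \<Rightarrow> aform \<Rightarrow> (nat \<Rightarrow> (nat \<Rightarrow> int)) \<Rightarrow> bool" where
  "sat D A (AEq s t) env = eventually (\<lambda>q. teval s env q = teval t env q) D"
| "sat D A (ALess s t) env = eventually (\<lambda>q. teval s env q < teval t env q) D"
| "sat D A (ANot f) env = (\<not> sat D A f env)"
| "sat D A (AAnd f g) env = (sat D A f env \<and> sat D A g env)"
| "sat D A (AEx i f) env = (\<exists>x\<in>A. sat D A f (env(i := x)))"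

text \<open>M (a set of representatives, i.e. ^fZ) is an elementary substructure of *Z
  containing Z (as constant sequences); then Z \<prec> ^fZ \<prec> *Z.\<close>
definition elem_sub_containing_Z :: "nat filter \<Rightarrow> (nat \<Rightarrow> int) set \<Rightarrow> bool" where
  "elem_sub_containing_Z D M \<longleftrightarrow>
     (\<forall>c::int. (\<lambda>_. c) \<in> M) \<and>
     (\<forall>f env. (\<forall>i. env i \<in> M) \<longrightarrow> (sat D M f env \<longleftrightarrow> sat D UNIV f env))"

text \<open>a (representing an element of F) lies in S_m(F), witnessed by k1, k2 in Z(m):
  z = k1 k2^{-1} in F (stated as z*k2 = k1, k2 being a unit in F), k2 \<noteq> 0, |k1|/|k2| \<le> m.\<close>
definition in_S :: "nat filter \<Rightarrow> (nat \<Rightarrow> int) \<Rightarrow> nat \<Rightarrow> (nat \<Rightarrow> int)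
                    \<Rightarrow> (nat \<Rightarrow> int) \<Rightarrow> (nat \<Rightarrow> int) \<Rightarrow> bool" where
  "in_S D l m a k1 k2 \<longleftrightarrow> eventually (\<lambda>q.
      \<bar>k1 q\<bar> < l q ^ m \<and> \<bar>k2 q\<bar> < l q ^ m \<and> k2 q \<noteq> 0 \<and>
      \<bar>k1 q\<bar> \<le> int m * \<bar>k2 q\<bar> \<and> (a q * k2 q) mod int q = k1 q mod int q) D"

text \<open>Standard part of the hyperrational k1/k2: the real number r with
  |k1/k2 - r| < eps for every standard eps > 0, i.e. the D-limit.\<close>
definition st_ratio :: "nat filter \<Rightarrow> (nat \<Rightarrow> int) \<Rightarrow> (nat \<Rightarrow> int) \<Rightarrow> real" where
  "st_ratio D k1 k2 = (THE r. ((\<lambda>q. real_of_int (k1 q) / real_of_int (k2 q)) \<longlongrightarrow> r) D)"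

definition in_V_F :: "nat filter \<Rightarrow> 'n::finite zpoly list \<Rightarrow> ('n \<Rightarrow> (nat \<Rightarrow> int)) \<Rightarrow> bool" where
  "in_V_F D Ps x \<longleftrightarrow> eventually (\<lambda>q. \<forall>p\<in>set Ps. peval p (\<lambda>i. x i q) mod int q = 0) D"

text \<open>lm^loc V(F_q): image of V(F) \<inter> (F_{/l})^n under the coordinatewise map
  F_{/l} \<rightarrow> F_{/l}/\<approx> = R, z = k1/k2 \<mapsto> st(k1/k2).\<close>
definition lm_loc :: "nat filter \<Rightarrow> (nat \<Rightarrow> int) \<Rightarrow> 'n::finite zpoly list \<Rightarrow> (real ^ 'n) set" where
  "lm_loc D l Ps = {y. \<exists>x. in_V_F D Ps x \<and>
      (\<forall>i. \<exists>m k1 k2. in_S D l m (x i) k1 k2 \<and> y $ i = st_ratio D k1 k2)}"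

end

theory Submission
  imports Defs "HOL-Number_Theory.Number_Theory"
begin

(*
  For D-almost every prime q, a point of V(F) whose coordinates are k1/k2 with |k1|, |k2| < l^m
  reduces to a rational candidate point (k1 q / k2 q). Clearing denominators in a defining
  polynomial p gives an integer that is divisible by q and bounded by C l^K for standard C, K.
  Since l lies in the elementary substructure ^fZ, so does C l^K, which is therefore below q;
  hence the integer vanishes and the candidate lies in V(Q). Its D-limit, the standard part,
  lies in the closure of V(Q).
  Conversely, for a limit y of rational points s_n, pick for each q the largest n <= q whose
  height is below the infinite integer l q and reduce s_n modulo q: clearing denominators now
  shows that the reductions lie in V(F_q), as q does not divide the denominators.
*)

lemma peval_Nil [simp]: "peval [] x = 0"
  by (simp add: peval_def)

lemma peval_Cons [simp]: "peval ((c, e) # p) x = of_int c * (\<Prod>i\<in>UNIV. x i ^ e i) + peval p x"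
  by (simp add: peval_def)

lemma continuous_on_peval: "continuous_on UNIV (\<lambda>y::real^'n::finite. peval p (vec_nth y))"
  by (induction p) (auto intro!: continuous_intros)

lemma closed_V_real: "closed (V_real Ps)"
proof -
  have "V_real Ps = (\<Inter>p\<in>set Ps. {y. peval p (vec_nth y) = 0})"
    unfolding V_real_def by auto
  then show ?thesis
    by (simp add: closed_INT closed_Collect_eq continuous_on_peval)
qed

definition homog :: "'n::finite zpoly \<Rightarrow> nat \<Rightarrow> ('n \<Rightarrow> 'a::comm_ring_1) \<Rightarrow> ('n \<Rightarrow> 'a) \<Rightarrow> 'a" where
  "homog p E a b = (\<Sum>(c, e) \<leftarrow> p. of_int c * (\<Prod>i\<in>UNIV. a i ^ e i * b i ^ (E - e i)))"

lemma homog_Nil [simp]: "homog [] E a b = 0"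
  by (simp add: homog_def)

lemma homog_Cons [simp]:
  "homog ((c, e) # p) E a b = of_int c * (\<Prod>i\<in>UNIV. a i ^ e i * b i ^ (E - e i)) + homog p E a b"
  by (simp add: homog_def)

definition exponent_bound :: "'n::finite zpoly \<Rightarrow> nat" where
  "exponent_bound p = sum_list (map (\<lambda>(c, e). \<Sum>i\<in>UNIV. e i) p)"

lemma exponents_le_exponent_bound: "\<forall>(c, e)\<in>set p. \<forall>i. e i \<le> exponent_bound p"
proof (intro ballI allI, clarify)
  fix c e i assume "(c, e) \<in> set p"
  have "e i \<le> (\<Sum>i\<in>UNIV. e i)"
    by (rule member_le_sum) auto
  also have "\<dots> \<le> exponent_bound p"
    unfolding exponent_bound_def by (rule member_le_sum_list) (use \<open>(c, e) \<in> set p\<close> in force, simp)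
  finally show "e i \<le> exponent_bound p" .
qed

lemma homog_mult_denominators:
  fixes x b :: "'n::finite \<Rightarrow> 'a::comm_ring_1"
  assumes "\<forall>(c, e)\<in>set p. \<forall>i. e i \<le> E"
  shows "homog p E (\<lambda>i. x i * b i) b = (\<Prod>i\<in>UNIV. b i ^ E) * peval p x"
  using assms
proof (induction p)
  case Nil
  then show ?case by simp
next
  case (Cons ce p)
  obtain c e where ce: "ce = (c, e)"
    by force
  have "(x i * b i) ^ e i * b i ^ (E - e i) = b i ^ E * x i ^ e i" for i
  proof -
    have "e i + (E - e i) = E"
      using Cons.prems ce by auto
    then have "b i ^ e i * b i ^ (E - e i) = b i ^ E"
      by (metis power_add)
    moreover have "(x i * b i) ^ e i * b i ^ (E - e i) = x i ^ e i * (b i ^ e i * b i ^ (E - e i))"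
      by (simp add: power_mult_distrib mult.assoc)
    ultimately show ?thesis
      by (simp add: mult.commute)
  qed
  then have "(\<Prod>i\<in>UNIV. (x i * b i) ^ e i * b i ^ (E - e i))
      = (\<Prod>i\<in>UNIV. b i ^ E) * (\<Prod>i\<in>UNIV. x i ^ e i)"
    by (simp add: prod.distrib)
  then show ?case
    using Cons ce by (simp add: algebra_simps)
qed

lemma of_int_homog:
  "of_int (homog p E a b) = homog p E (\<lambda>i. of_int (a i)) (\<lambda>i. of_int (b i))"
  by (induction p) (auto simp: of_int_prod)

lemma cong_homog:
  fixes a a' b :: "'n::finite \<Rightarrow> int"
  assumes "\<forall>i. [a i = a' i] (mod q)"
  shows "[homog p E a b = homog p E a' b] (mod q)"
proof (induction p)
  case (Cons ce p)
  then show ?case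
    by (cases ce) (auto intro!: cong_add cong_mult cong_prod cong_pow cong_refl simp: assms)
qed simp

lemma abs_homog_le:
  fixes a b :: "'n::finite \<Rightarrow> int"
  assumes "\<forall>(c, e)\<in>set p. \<forall>i. e i \<le> E" and "\<forall>i. \<bar>a i\<bar> \<le> B \<and> \<bar>b i\<bar> \<le> B"
  shows "\<bar>homog p E a b\<bar> \<le> (\<Sum>(c, e) \<leftarrow> p. \<bar>c\<bar>) * B ^ (E * CARD('n))"
  using assms(1)
proof (induction p)
  case Nil
  then show ?case by simp
next
  case (Cons ce p)
  obtain c e where ce: "ce = (c, e)"
    by force
  have "0 \<le> B"
    using assms(2) abs_ge_zero order_trans by blast
  have "\<bar>a i\<bar> ^ e i * \<bar>b i\<bar> ^ (E - e i) \<le> B ^ E" for i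
  proof -
    have "E = e i + (E - e i)"
      using Cons.prems ce by auto
    then have "B ^ E = B ^ e i * B ^ (E - e i)"
      by (metis power_add)
    then show ?thesis
      using assms(2) \<open>0 \<le> B\<close> by (auto intro!: mult_mono power_mono)
  qed
  then have "(\<Prod>i\<in>UNIV. \<bar>a i\<bar> ^ e i * \<bar>b i\<bar> ^ (E - e i)) \<le> (\<Prod>i\<in>(UNIV::'n set). B ^ E)"
    by (intro prod_mono) auto
  then have "\<bar>\<Prod>i\<in>UNIV. a i ^ e i * b i ^ (E - e i)\<bar> \<le> B ^ (E * CARD('n))"
    by (simp add: abs_prod abs_mult power_abs power_mult)
  then have "\<bar>c * (\<Prod>i\<in>UNIV. a i ^ e i * b i ^ (E - e i))\<bar> \<le> \<bar>c\<bar> * B ^ (E * CARD('n))"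
    by (simp add: abs_mult mult_left_mono)
  then show ?case
    using Cons ce by (simp add: algebra_simps order_trans[OF abs_triangle_ineq])
qed

lemma peval_divide_eq_0_if_small_root_mod:
  fixes a b x :: "'n::finite \<Rightarrow> int"
  assumes root: "[peval p x = 0] (mod q)"
    and frac: "\<forall>i. [x i * b i = a i] (mod q)" and nz: "\<forall>i. b i \<noteq> 0"
    and small: "\<forall>i. \<bar>a i\<bar> \<le> B \<and> \<bar>b i\<bar> \<le> B"
      "(\<Sum>(c, e) \<leftarrow> p. \<bar>c\<bar>) * B ^ (exponent_bound p * CARD('n)) < q"
  shows "peval p (\<lambda>i. of_int (a i) / of_int (b i) :: 'a::field_char_0) = 0"
proof -
  let ?E = "exponent_bound p"
  have "[homog p ?E a b = homog p ?E (\<lambda>i. x i * b i) b] (mod q)"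
    using frac by (intro cong_homog) (simp add: cong_sym)
  also have "homog p ?E (\<lambda>i. x i * b i) b = (\<Prod>i\<in>UNIV. b i ^ ?E) * peval p x"
    by (rule homog_mult_denominators[OF exponents_le_exponent_bound])
  also have "[\<dots> = (\<Prod>i\<in>UNIV. b i ^ ?E) * 0] (mod q)"
    using root by (rule cong_scalar_left)
  finally have dvd: "q dvd homog p ?E a b"
    by (simp add: cong_0_iff)
  have less: "\<bar>homog p ?E a b\<bar> < q"
    using abs_homog_le[OF exponents_le_exponent_bound[of p] small(1)] small(2) by linarith
  have "homog p ?E a b = 0"
  proof (rule ccontr)
    assume "homog p ?E a b \<noteq> 0"
    from dvd_imp_le_int[OF this dvd] less show False
      by linarith
  qed
  then have "(0::'a) = of_int (homog p ?E a b)"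
    by simp
  also have "\<dots> = homog p ?E (\<lambda>i. of_int (a i) / of_int (b i) * of_int (b i)) (\<lambda>i. of_int (b i))"
    using nz by (simp add: of_int_homog)
  also have "\<dots> = (\<Prod>i\<in>UNIV. of_int (b i) ^ ?E) * peval p (\<lambda>i. of_int (a i) / of_int (b i))"
    by (rule homog_mult_denominators[OF exponents_le_exponent_bound])
  finally show ?thesis
    using nz by simp
qed

lemma cong_peval_0_if_rational_root:
  fixes a b x :: "'n::finite \<Rightarrow> int"
  assumes "prime q" and rat_root: "peval p (\<lambda>i. of_int (a i) / of_int (b i) :: 'a::field_char_0) = 0"
    and frac: "\<forall>i. [x i * b i = a i] (mod q)" and ndvd: "\<forall>i. \<not> q dvd b i"
  shows "[peval p x = 0] (mod q)"
proof -
  let ?E = "exponent_bound p"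
  have nz: "b i \<noteq> 0" for i
    using ndvd dvd_0_right by metis
  have "(of_int (homog p ?E a b) :: 'a)
      = homog p ?E (\<lambda>i. of_int (a i) / of_int (b i) * of_int (b i)) (\<lambda>i. of_int (b i))"
    using nz by (simp add: of_int_homog)
  also have "\<dots> = (\<Prod>i\<in>UNIV. of_int (b i) ^ ?E) * peval p (\<lambda>i. of_int (a i) / of_int (b i))"
    by (rule homog_mult_denominators[OF exponents_le_exponent_bound])
  finally have "homog p ?E a b = 0"
    using rat_root by simp
  moreover have "[homog p ?E (\<lambda>i. x i * b i) b = homog p ?E a b] (mod q)"
    using frac by (rule cong_homog)
  ultimately have "q dvd (\<Prod>i\<in>UNIV. b i ^ ?E) * peval p x"
    by (simp add: homog_mult_denominators[OF exponents_le_exponent_bound] cong_0_iff)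
  moreover have "\<not> q dvd (\<Prod>i\<in>UNIV. b i ^ ?E)"
    using ndvd \<open>prime q\<close> by (auto simp: prime_dvd_prod_iff dest: prime_dvd_power)
  ultimately show ?thesis
    using \<open>prime q\<close> by (simp add: prime_dvd_mult_iff cong_0_iff)
qed

lemma ultrafilter_tendsto_compact:
  fixes f :: "'a \<Rightarrow> 'b::topological_space"
  assumes "F \<noteq> bot" and ultra: "\<And>P. eventually P F \<or> eventually (\<lambda>x. \<not> P x) F"
    and "compact K" and "eventually (\<lambda>x. f x \<in> K) F"
  obtains L where "L \<in> K" and "(f \<longlongrightarrow> L) F"
proof -
  have "filtermap f F \<noteq> bot" and "eventually (\<lambda>y. y \<in> K) (filtermap f F)"
    using assms by (simp_all add: filtermap_bot_iff eventually_filtermap)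
  then obtain L where "L \<in> K" and cluster: "inf (nhds L) (filtermap f F) \<noteq> bot"
    using compact_filter[THEN iffD1, OF \<open>compact K\<close>, rule_format] by blast
  have "(f \<longlongrightarrow> L) F"
  proof (rule topological_tendstoI)
    fix S assume "open S" "L \<in> S"
    show "eventually (\<lambda>x. f x \<in> S) F"
    proof (rule ccontr)
      assume "\<not> eventually (\<lambda>x. f x \<in> S) F"
      then have "eventually (\<lambda>y. y \<notin> S) (filtermap f F)"
        using ultra by (auto simp: eventually_filtermap)
      moreover have "eventually (\<lambda>y. y \<in> S) (nhds L)"
        using \<open>open S\<close> \<open>L \<in> S\<close> by (rule eventually_nhds_in_open)
      ultimately have "eventually (\<lambda>y. False) (inf (nhds L) (filtermap f F))"
        unfolding eventually_inf by (intro exI[of _ "\<lambda>y. y \<in> S"] exI[of _ "\<lambda>y. y \<notin> S"]) auto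
      then show False
        using cluster by (simp add: eventually_False)
    qed
  qed
  then show ?thesis
    using \<open>L \<in> K\<close> that by blast
qed

lemma nonprincipal_ultrafilter_le_sequentially:
  assumes "nonprincipal_ultrafilter D"
  shows "D \<le> sequentially"
  unfolding le_sequentially
proof
  fix n
  have "eventually (\<lambda>k. \<forall>j\<in>{..<n}. k \<noteq> j) D"
    using assms unfolding nonprincipal_ultrafilter_def by (intro eventually_ball_finite) auto
  then show "eventually (\<lambda>k. n \<le> k) D"
    by (rule eventually_mono) (auto simp: not_less[symmetric])
qed

lemma st_ratio_eqI:
  assumes "D \<noteq> bot" and "((\<lambda>q. real_of_int (k1 q) / real_of_int (k2 q)) \<longlongrightarrow> L) D"
  shows "st_ratio D k1 k2 = L"
  unfolding st_ratio_def using assms tendsto_unique by blast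

lemma tendsto_st_ratio:
  assumes "nonprincipal_ultrafilter D" and "in_S D l m z k1 k2"
  shows "((\<lambda>q. real_of_int (k1 q) / real_of_int (k2 q)) \<longlongrightarrow> st_ratio D k1 k2) D"
proof -
  have "D \<noteq> bot" and ultra: "\<And>P. eventually P D \<or> eventually (\<lambda>x. \<not> P x) D"
    using assms(1) unfolding nonprincipal_ultrafilter_def by auto
  have "eventually (\<lambda>q. real_of_int (k1 q) / real_of_int (k2 q) \<in> cball 0 m) D"
    using assms(2) unfolding in_S_def
  proof (rule eventually_mono, clarify)
    fix q assume "k2 q \<noteq> 0" "\<bar>k1 q\<bar> \<le> int m * \<bar>k2 q\<bar>"
    then have "real_of_int \<bar>k1 q\<bar> \<le> real_of_int (int m * \<bar>k2 q\<bar>)"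
      by (simp only: of_int_le_iff)
    then show "real_of_int (k1 q) / real_of_int (k2 q) \<in> cball 0 m"
      using \<open>k2 q \<noteq> 0\<close> by (simp add: abs_divide pos_divide_le_eq)
  qed
  then obtain L where "L \<in> cball 0 m" and "((\<lambda>q. real_of_int (k1 q) / real_of_int (k2 q)) \<longlongrightarrow> L) D"
    by (rule ultrafilter_tendsto_compact[OF \<open>D \<noteq> bot\<close> ultra compact_cball])
  then show ?thesis
    using st_ratio_eqI[OF \<open>D \<noteq> bot\<close>] by simp
qed

fun apower :: "aterm \<Rightarrow> nat \<Rightarrow> aterm" where
  "apower t 0 = AOne"
| "apower t (Suc n) = ATimes t (apower t n)"

lemma teval_apower: "teval (apower t n) env = (\<lambda>q. teval t env q ^ n)"
  by (induction n) auto

lemma elem_sub_containing_Z_mult_power: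
  assumes "elem_sub_containing_Z D M" and "l \<in> M"
  shows "\<exists>z\<in>M. eventually (\<lambda>q. z q = c * l q ^ K) D"
proof -
  \<comment> \<open>The sentence \<open>\<exists>v\<^sub>0. v\<^sub>0 = v\<^sub>1 * v\<^sub>2 ^ K\<close> with \<open>v\<^sub>1 := c\<close>, \<open>v\<^sub>2 := l\<close> holds in *Z,
    so by elementarity it has a witness in M.\<close>
  define env where "env = (\<lambda>_::nat. l)(1 := (\<lambda>_. c))"
  have env_M: "\<forall>i. env i \<in> M"
    using assms unfolding env_def elem_sub_containing_Z_def by auto
  define f where "f = AEx 0 (AEq (AVar 0) (ATimes (AVar 1) (apower (AVar 2) K)))"
  have "sat D UNIV f env"
    unfolding f_def by (auto simp: teval_apower env_def intro!: exI[of _ "\<lambda>q. c * l q ^ K"])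
  then have "sat D M f env"
    using assms(1) env_M unfolding elem_sub_containing_Z_def by blast
  then show ?thesis
    unfolding f_def by (auto simp: teval_apower env_def)
qed

lemma eventually_mult_power_less_modulus:
  assumes "elem_sub_containing_Z D M" and "\<forall>k\<in>M. eventually (\<lambda>q. k q < int q) D" and "l \<in> M"
  shows "eventually (\<lambda>q. c * l q ^ K < int q) D"
proof -
  obtain z where "z \<in> M" and "eventually (\<lambda>q. z q = c * l q ^ K) D"
    using elem_sub_containing_Z_mult_power[OF assms(1,3)] by blast
  with assms(2) show ?thesis
    by (auto elim: eventually_elim2)
qed

lemma eventually_ratios_in_V_rat:
  fixes Ps :: "'n::finite zpoly list"
  assumes EM: "elem_sub_containing_Z D M" and below: "\<forall>k\<in>M. eventually (\<lambda>q. k q < int q) D"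
    and "l \<in> M" and l_pos: "eventually (\<lambda>q. 0 < l q) D"
    and xV: "in_V_F D Ps x" and xS: "\<forall>i. in_S D l (m i) (x i) (k1 i) (k2 i)"
  shows "eventually (\<lambda>q. (\<chi> i. real_of_int (k1 i q) / real_of_int (k2 i q)) \<in> V_rat Ps) D"
proof -
  define m' where "m' = Max (range m)"
  have small: "eventually (\<lambda>q. \<forall>p\<in>set Ps.
      (\<Sum>(c, e) \<leftarrow> p. \<bar>c\<bar>) * (l q ^ m') ^ (exponent_bound p * CARD('n)) < int q) D"
  proof (intro eventually_ball_finite ballI)
    fix p :: "'n zpoly"
    show "eventually (\<lambda>q. (\<Sum>(c, e) \<leftarrow> p. \<bar>c\<bar>) * (l q ^ m') ^ (exponent_bound p * CARD('n)) < int q) D"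
      using eventually_mult_power_less_modulus[OF EM below \<open>l \<in> M\<close>,
          of "\<Sum>(c, e) \<leftarrow> p. \<bar>c\<bar>" "m' * (exponent_bound p * CARD('n))"]
      by (simp add: power_mult)
  qed simp
  have frac: "eventually (\<lambda>q. \<forall>i. \<bar>k1 i q\<bar> < l q ^ m i \<and> \<bar>k2 i q\<bar> < l q ^ m i \<and> k2 i q \<noteq> 0 \<and>
      [x i q * k2 i q = k1 i q] (mod int q)) D"
    using xS unfolding in_S_def cong_def by (intro eventually_all_finite) (auto elim: eventually_mono)
  show ?thesis
    using small frac l_pos xV unfolding in_V_F_def
  proof eventually_elim
    case (elim q)
    have "\<bar>k1 i q\<bar> \<le> l q ^ m' \<and> \<bar>k2 i q\<bar> \<le> l q ^ m'" for i
    proof -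
      have "l q ^ m i \<le> l q ^ m'"
        using elim by (intro power_increasing) (auto simp: m'_def)
      then show ?thesis
        using elim by (meson less_imp_le order_trans)
    qed
    then have "peval p (\<lambda>i. real_of_int (k1 i q) / real_of_int (k2 i q)) = 0" if "p \<in> set Ps" for p
      using elim that
      by (intro peval_divide_eq_0_if_small_root_mod[where x = "\<lambda>i. x i q"]) (auto simp: cong_def)
    then show ?case
      by (simp add: V_rat_def vec_lambda_inverse)
  qed
qed

lemma lm_loc_subset_closure_V_rat:
  assumes U: "nonprincipal_ultrafilter D" and EM: "elem_sub_containing_Z D M"
    and below: "\<forall>k\<in>M. eventually (\<lambda>q. k q < int q) D" and "l \<in> M"
    and l_unbounded: "\<forall>c::int. eventually (\<lambda>q. c < l q) D"
  shows "lm_loc D l Ps \<subseteq> closure (V_rat Ps)"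
proof
  fix y assume "y \<in> lm_loc D l Ps"
  then obtain x where xV: "in_V_F D Ps x"
    and "\<forall>i. \<exists>m k1 k2. in_S D l m (x i) k1 k2 \<and> y $ i = st_ratio D k1 k2"
    unfolding lm_loc_def by blast
  then obtain m k1 k2 where xS: "\<forall>i. in_S D l (m i) (x i) (k1 i) (k2 i)"
    and y: "\<forall>i. y $ i = st_ratio D (k1 i) (k2 i)"
    by metis
  have "D \<noteq> bot"
    using U by (simp add: nonprincipal_ultrafilter_def)
  have "((\<lambda>q. real_of_int (k1 i q) / real_of_int (k2 i q)) \<longlongrightarrow> y $ i) D" for i
    using tendsto_st_ratio[OF U, of l "m i" "x i" "k1 i" "k2 i"] xS y by simp
  then have "((\<lambda>q. \<chi> i. real_of_int (k1 i q) / real_of_int (k2 i q)) \<longlongrightarrow> y) D"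
    by (intro vec_tendstoI) simp
  moreover have "eventually (\<lambda>q. (\<chi> i. real_of_int (k1 i q) / real_of_int (k2 i q)) \<in> closure (V_rat Ps)) D"
    using eventually_ratios_in_V_rat[OF EM below \<open>l \<in> M\<close> l_unbounded[rule_format, of 0] xV xS]
    by (rule eventually_mono) (use closure_subset in blast)
  ultimately show "y \<in> closure (V_rat Ps)"
    by (intro Lim_in_closed_set[OF closed_closure _ \<open>D \<noteq> bot\<close>])
qed

lemma obtain_index_filterlim_below:
  fixes h :: "nat \<Rightarrow> int"
  assumes "D \<le> sequentially" and l_unbounded: "\<forall>c::int. eventually (\<lambda>q. c < l q) D"
  obtains N where "filterlim N sequentially D" and "eventually (\<lambda>q. h (N q) < l q) D"
proof -
  define S where "S q = {n. n \<le> q \<and> h n < l q}" for q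
  have mem: "eventually (\<lambda>q. n \<in> S q) D" for n
  proof -
    have "eventually (\<lambda>q. n \<le> q) D"
      using assms(1) by (simp add: le_sequentially)
    moreover have "eventually (\<lambda>q. h n < l q) D"
      using l_unbounded by blast
    ultimately show ?thesis
      using eventually_conj by (simp add: S_def)
  qed
  have Max_S: "n \<le> Max (S q) \<and> Max (S q) \<in> S q" if "n \<in> S q" for n q
  proof -
    have "finite (S q)"
      unfolding S_def by auto
    with that show ?thesis
      by (auto intro: Max_ge Max_in)
  qed
  have "filterlim (\<lambda>q. Max (S q)) sequentially D"
    unfolding filterlim_at_top
  proof
    fix n
    show "eventually (\<lambda>q. n \<le> Max (S q)) D"
      using mem[of n] by (rule eventually_mono) (use Max_S in blast)
  qed
  moreover have "eventually (\<lambda>q. h (Max (S q)) < l q) D"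
    using mem[of 0] by (rule eventually_mono) (use Max_S S_def in blast)
  ultimately show ?thesis
    using that by blast
qed

lemma in_S_modular_inverse:
  assumes lim: "((\<lambda>q. real_of_int (k1 q) / real_of_int (k2 q)) \<longlongrightarrow> L) D"
    and small: "eventually (\<lambda>q. prime q \<and> 0 < k2 q \<and> k2 q < l q \<and> \<bar>k1 q\<bar> < l q \<and> l q < int q) D"
  shows "in_S D l (nat \<lceil>\<bar>L\<bar>\<rceil> + 1) (\<lambda>q. k1 q * modular_inverse (int q) (k2 q)) k1 k2"
proof -
  let ?m = "nat \<lceil>\<bar>L\<bar>\<rceil> + 1"
  have m: "\<bar>L\<bar> + 1 \<le> real ?m"
    by (simp add: of_nat_nat)
  have "eventually (\<lambda>q. \<bar>real_of_int (k1 q) / real_of_int (k2 q)\<bar> < \<bar>L\<bar> + 1) D"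
    using tendsto_rabs[OF lim] by (rule order_tendstoD) simp
  then have "eventually (\<lambda>q. \<bar>real_of_int (k1 q) / real_of_int (k2 q)\<bar> < real ?m) D"
    by (rule eventually_mono) (use m in linarith)
  then show ?thesis
    using small unfolding in_S_def
  proof eventually_elim
    case (elim q)
    then have "real_of_int \<bar>k1 q\<bar> < real ?m * real_of_int (k2 q)"
      by (simp add: abs_divide pos_divide_less_eq)
    then have "real_of_int \<bar>k1 q\<bar> < real_of_int (int ?m * k2 q)"
      by (simp only: of_int_mult of_int_of_nat_eq)
    then have ratio: "\<bar>k1 q\<bar> \<le> int ?m * \<bar>k2 q\<bar>"
      using elim by (simp only: of_int_less_iff) simp
    have "l q \<le> l q ^ ?m"
      using elim by (intro self_le_power) auto
    then have "\<bar>k1 q\<bar> < l q ^ ?m" and "k2 q < l q ^ ?m"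
      using elim by (meson less_le_trans)+
    have "coprime (k2 q) (int q)"
      using elim by (auto intro!: prime_imp_coprime[THEN coprime_commute[THEN iffD1]] dest: zdvd_imp_le)
    then have "[k1 q * (k2 q * modular_inverse (int q) (k2 q)) = k1 q * 1] (mod int q)"
      by (intro cong_scalar_left cong_modular_inverse1)
    then show ?case
      using elim ratio \<open>\<bar>k1 q\<bar> < l q ^ ?m\<close> \<open>k2 q < l q ^ ?m\<close> by (auto simp: cong_def ac_simps)
  qed
qed

lemma in_V_F_if_ratios_in_V_rat:
  fixes Ps :: "'n::finite zpoly list"
  assumes "eventually (\<lambda>q. prime q) D" and xS: "\<forall>i. in_S D l (m i) (x i) (k1 i) (k2 i)"
    and "eventually (\<lambda>q. (\<forall>i. \<bar>k2 i q\<bar> < int q) \<and>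
      (\<chi> i. real_of_int (k1 i q) / real_of_int (k2 i q)) \<in> V_rat Ps) D"
  shows "in_V_F D Ps x"
proof -
  have "eventually (\<lambda>q. \<forall>i. k2 i q \<noteq> 0 \<and> [x i q * k2 i q = k1 i q] (mod int q)) D"
    using xS unfolding in_S_def cong_def by (intro eventually_all_finite) (auto elim: eventually_mono)
  with assms(1,3) show ?thesis
    unfolding in_V_F_def
  proof eventually_elim
    case (elim q)
    have "\<not> int q dvd k2 i q" for i
    proof
      assume "int q dvd k2 i q"
      then have "int q \<le> \<bar>k2 i q\<bar>"
        using elim dvd_imp_le_int[of "k2 i q" "int q"] by simp
      moreover have "\<bar>k2 i q\<bar> < int q"
        using elim by blast
      ultimately show False
        by linarith
    qed
    then show ?case
      using elim cong_peval_0_if_rational_root[of "int q" _ "\<lambda>i. k1 i q" "\<lambda>i. k2 i q" "\<lambda>i. x i q", where 'a = real]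
      by (auto simp: V_rat_def vec_lambda_inverse cong_def)
  qed
qed

lemma obtain_fractions_of_rational_vectors:
  fixes s :: "nat \<Rightarrow> real ^ 'n::finite"
  assumes "\<And>n i. s n $ i \<in> \<rat>"
  obtains num den :: "nat \<Rightarrow> 'n \<Rightarrow> int" and h :: "nat \<Rightarrow> int"
  where "\<And>n i. 0 < den n i"
    and "\<And>n. s n = (\<chi> i. real_of_int (num n i) / real_of_int (den n i))"
    and "\<And>n i. \<bar>num n i\<bar> \<le> h n \<and> den n i \<le> h n"
proof -
  have "\<forall>n i. \<exists>a b. 0 < b \<and> s n $ i = real_of_int a / real_of_int b"
    using assms by (metis Rats_cases')
  then obtain num den where den: "\<And>n i. 0 < den n i"
    and s_eq: "\<And>n i. s n $ i = real_of_int (num n i) / real_of_int (den n i)"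
    by metis
  define h where "h n = Max (range (\<lambda>i. max \<bar>num n i\<bar> (den n i)))" for n
  have "max \<bar>num n i\<bar> (den n i) \<le> h n" for n i
    unfolding h_def by (rule Max_ge) auto
  then have "\<bar>num n i\<bar> \<le> h n \<and> den n i \<le> h n" for n i
    by simp
  moreover have "s n = (\<chi> i. real_of_int (num n i) / real_of_int (den n i))" for n
    by (simp add: vec_eq_iff s_eq)
  ultimately show ?thesis
    using that den by blast
qed

lemma closure_V_rat_subset_lm_loc:
  fixes Ps :: "'n::finite zpoly list"
  assumes U: "nonprincipal_ultrafilter D" and prime: "eventually (\<lambda>q. prime q) D"
    and l_below: "eventually (\<lambda>q. l q < int q) D"
    and l_unbounded: "\<forall>c::int. eventually (\<lambda>q. c < l q) D"
  shows "closure (V_rat Ps) \<subseteq> lm_loc D l Ps"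
proof
  fix y assume "y \<in> closure (V_rat Ps)"
  then obtain s where sV: "\<And>n. s n \<in> V_rat Ps" and s_lim: "s \<longlonglongrightarrow> y"
    unfolding closure_sequential by blast
  obtain num den h where den: "\<And>n i. 0 < den n i"
    and s_eq: "\<And>n. s n = (\<chi> i. real_of_int (num n i) / real_of_int (den n i))"
    and height: "\<And>n i. \<bar>num n i\<bar> \<le> h n \<and> den n i \<le> h n"
    by (rule obtain_fractions_of_rational_vectors[of s]) (use sV in \<open>auto simp: V_rat_def\<close>)
  obtain N where N_lim: "filterlim N sequentially D" and N_height: "eventually (\<lambda>q. h (N q) < l q) D"
    using obtain_index_filterlim_below[OF nonprincipal_ultrafilter_le_sequentially[OF U] l_unbounded] .
  define k1 where "k1 i q = num (N q) i" for i q
  define k2 where "k2 i q = den (N q) i" for i q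
  define x where "x i q = k1 i q * modular_inverse (int q) (k2 i q)" for i q
  have ratio: "(\<chi> i. real_of_int (k1 i q) / real_of_int (k2 i q)) = s (N q)" for q
    by (simp add: s_eq k1_def k2_def)
  have lim: "((\<lambda>q. real_of_int (k1 i q) / real_of_int (k2 i q)) \<longlongrightarrow> y $ i) D" for i
    using filterlim_compose[OF tendsto_vec_nth[OF s_lim] N_lim] by (simp add: s_eq k1_def k2_def)
  have small: "eventually (\<lambda>q. prime q \<and> 0 < k2 i q \<and> k2 i q < l q \<and> \<bar>k1 i q\<bar> < l q \<and> l q < int q) D" for i
    using prime N_height l_below
  proof eventually_elim
    case (elim q)
    then show ?case
      using height[of "N q" i] den[of "N q" i] by (auto simp: k1_def k2_def)
  qed
  have xS: "\<forall>i. in_S D l (nat \<lceil>\<bar>y $ i\<bar>\<rceil> + 1) (x i) (k1 i) (k2 i)"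
    unfolding x_def by (intro allI in_S_modular_inverse[OF lim small])
  have "D \<noteq> bot"
    using U by (simp add: nonprincipal_ultrafilter_def)
  then have y: "y $ i = st_ratio D (k1 i) (k2 i)" for i
    using st_ratio_eqI lim by metis
  have "eventually (\<lambda>q. \<bar>k2 i q\<bar> < int q) D" for i
    using small[of i] by (rule eventually_mono) auto
  then have "eventually (\<lambda>q. \<forall>i. \<bar>k2 i q\<bar> < int q) D"
    by (rule eventually_all_finite)
  then have "eventually (\<lambda>q. (\<forall>i. \<bar>k2 i q\<bar> < int q) \<and>
      (\<chi> i. real_of_int (k1 i q) / real_of_int (k2 i q)) \<in> V_rat Ps) D"
    by (rule eventually_mono) (simp add: ratio sV)
  then have "in_V_F D Ps x"
    by (rule in_V_F_if_ratios_in_V_rat[OF prime xS])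
  with xS y show "y \<in> lm_loc D l Ps"
    unfolding lm_loc_def by blast
qed

theorem proposition3p7:
  fixes D :: "nat filter" and M :: "(nat \<Rightarrow> int) set" and l :: "nat \<Rightarrow> int"
    and Ps :: "'n::finite zpoly list"
  assumes "nonprincipal_ultrafilter D"
    and "eventually (\<lambda>q. prime q) D"
    and "elem_sub_containing_Z D M"
    and "\<forall>k\<in>M. eventually (\<lambda>q. k q < int q) D"
    and "l \<in> M"
    and "\<forall>c::int. eventually (\<lambda>q. c < l q) D"
  shows "lm_loc D l Ps = closure (V_rat Ps) \<and> closure (V_rat Ps) \<subseteq> V_real Ps"
proof
  have l_below: "eventually (\<lambda>q. l q < int q) D"
    using assms(4,5) by blast
  show "lm_loc D l Ps = closure (V_rat Ps)"
    using lm_loc_subset_closure_V_rat[OF assms(1,3-6)] closure_V_rat_subset_lm_loc[OF assms(1,2) l_below assms(6)]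
    by (rule subset_antisym)
  show "closure (V_rat Ps) \<subseteq> V_real Ps"
  proof (rule closure_minimal[OF _ closed_V_real])
    show "V_rat Ps \<subseteq> V_real Ps"
      by (auto simp: V_rat_def V_real_def)
  qed
qed

end
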